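(* Let $G$ be a finite group and $U$ a projective unitary representation of $G$ on a finite dimensional complex Hilbert space $\mathcal{H}$. Suppose there exist two linearly independent vectors $v_1,v_2\in\mathcal{H}$ and functions $f_1,f_2:G\to\mathbb{T}$ such that $U(g)v_i=f_i(g)v_i$ for all $g\in G$ and $i\in\{1,2\}$. Then there exists no $U$-covariant pure-state informationally complete observable (based on $G/H$ for any proper subgroup $H$ of $G$).
   Context: $\mathbb{T}$ is the group of unimodular complex numbers. A projective unitary representation of $G$ on $\mathcal{H}$ is a map $g\mapsto U(g)$ into the unitaries with $U(e)=I$ and $U(gh)=\omega(g,h)U(g)U(h)$, $\omega(g,h)\in\mathbb{T}$. An observable with finite outcome set $\Omega$ is a map $\mathsf{M}$ from $\Omega$ to positive operators on $\mathcal{H}$ with $\sum_{x\in\Omega}\mathsf{M}(x)=I$. It is pure-state informationally complete (PIC) if for any two different pure states (rank-one projections) $\varrho_1\neq\varrho_2$ there is $x\in\Omega$ with $\mathrm{tr}(\varrho_1\mathsf{M}(x))\neq\mathrm{tr}(\varrho_2\mathsf{M}(x))$. For a subgroup $H$ of $G$, $G$ acts on the set of left cosets $G/H$ by $g'\cdot gH=g'gH$; an observable $\mathsf{M}$ on $\Omega=G/H$ is $U$-covariant if $U(g)\mathsf{M}(x)U(g)^*=\mathsf{M}(g\cdot x)$ for all $g\in G$, $x\in G/H$. *)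

theory Defs
  imports "HOL-Algebra.Left_Coset" "Jordan_Normal_Form.Schur_Decomposition"
begin

(* The finite-dimensional complex Hilbert space H is C^n (column vectors of
   dimension n, inner product <v,w> = w \<bullet>c v, i.e. conjugate-linear in
   the first slot); operators on H are n x n complex matrices. *)

definition mat_trace :: "complex mat \<Rightarrow> complex" where
  "mat_trace A = (\<Sum>i<dim_row A. A $$ (i, i))"

definition unitary_mat :: "nat \<Rightarrow> complex mat \<Rightarrow> bool" where
  "unitary_mat n A \<longleftrightarrow> A \<in> carrier_mat n n \<and>
     A * mat_adjoint A = 1\<^sub>m n \<and> mat_adjoint A * A = 1\<^sub>m n"

definition positive_op :: "nat \<Rightarrow> complex mat \<Rightarrow> bool" where
  "positive_op n A \<longleftrightarrow> A \<in> carrier_mat n n \<and>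
     (\<forall>v \<in> carrier_vec n. (A *\<^sub>v v) \<bullet>c v \<in> \<real> \<and> 0 \<le> Re ((A *\<^sub>v v) \<bullet>c v))"

definition ket_bra :: "nat \<Rightarrow> complex vec \<Rightarrow> complex mat" where
  "ket_bra n v = mat n n (\<lambda>(i, j). v $ i * cnj (v $ j))"

definition pure_state :: "nat \<Rightarrow> complex mat \<Rightarrow> bool" where
  "pure_state n \<rho> \<longleftrightarrow> (\<exists>v \<in> carrier_vec n. v \<bullet>c v = 1 \<and> \<rho> = ket_bra n v)"

definition mat_sum :: "nat \<Rightarrow> ('b \<Rightarrow> complex mat) \<Rightarrow> 'b set \<Rightarrow> complex mat" where
  "mat_sum n M \<Omega> = mat n n (\<lambda>(i, j). \<Sum>x\<in>\<Omega>. M x $$ (i, j))"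

definition proj_unitary_rep :: "('a, 'c) monoid_scheme \<Rightarrow> nat \<Rightarrow> ('a \<Rightarrow> complex mat) \<Rightarrow> bool" where
  "proj_unitary_rep G n U \<longleftrightarrow>
     (\<forall>g \<in> carrier G. unitary_mat n (U g)) \<and>
     U \<one>\<^bsub>G\<^esub> = 1\<^sub>m n \<and>
     (\<forall>g \<in> carrier G. \<forall>h \<in> carrier G. \<exists>\<omega>::complex. cmod \<omega> = 1 \<and>
        U (g \<otimes>\<^bsub>G\<^esub> h) = \<omega> \<cdot>\<^sub>m (U g * U h))"

definition observable :: "nat \<Rightarrow> 'b set \<Rightarrow> ('b \<Rightarrow> complex mat) \<Rightarrow> bool" where
  "observable n \<Omega> M \<longleftrightarrow> finite \<Omega> \<and> (\<forall>x \<in> \<Omega>. positive_op n (M x)) \<and>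
     mat_sum n M \<Omega> = 1\<^sub>m n"

definition PIC :: "nat \<Rightarrow> 'b set \<Rightarrow> ('b \<Rightarrow> complex mat) \<Rightarrow> bool" where
  "PIC n \<Omega> M \<longleftrightarrow> (\<forall>\<rho>1 \<rho>2. pure_state n \<rho>1 \<longrightarrow> pure_state n \<rho>2 \<longrightarrow> \<rho>1 \<noteq> \<rho>2 \<longrightarrow>
     (\<exists>x \<in> \<Omega>. mat_trace (\<rho>1 * M x) \<noteq> mat_trace (\<rho>2 * M x)))"

(* U-covariance on \<Omega> = G/H (left cosets), action g \<cdot> aH = (g a)H = g <# (aH) *)
definition covariant :: "('a, 'c) monoid_scheme \<Rightarrow> 'a set \<Rightarrow> ('a \<Rightarrow> complex mat) \<Rightarrow>
    ('a set \<Rightarrow> complex mat) \<Rightarrow> bool" where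
  "covariant G H U M \<longleftrightarrow>
     (\<forall>g \<in> carrier G. \<forall>x \<in> lcosets\<^bsub>G\<^esub> H. U g * M x * mat_adjoint (U g) = M (g <#\<^bsub>G\<^esub> x))"

definition lin_indep2 :: "complex vec \<Rightarrow> complex vec \<Rightarrow> bool" where
  "lin_indep2 v1 v2 \<longleftrightarrow> (\<forall>a b::complex. a \<cdot>\<^sub>v v1 + b \<cdot>\<^sub>v v2 = 0\<^sub>v (dim_vec v1) \<longrightarrow> a = 0 \<and> b = 0)"

end

theory Submission
  imports Defs
begin

(* If u is a unit vector with U(g) u = f(g) u for all g, covariance gives
   <u, M(aH) u> = <U(a)^* u, M(H) U(a)^* u> = <u, M(H) u>, since U(a)^* u is a
   unimodular multiple of u. So the outcome distribution of u is constant on G/H,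
   hence uniform. Two linearly independent joint eigenvectors therefore give two
   different pure states with the same statistics, and M cannot be PIC. *)

lemma trace_ket_bra_mult:
  assumes "A \<in> carrier_mat n n" and "u \<in> carrier_vec n"
  shows "mat_trace (ket_bra n u * A) = (A *\<^sub>v u) \<bullet>c u"
proof -
  have "mat_trace (ket_bra n u * A) = (\<Sum>i<n. \<Sum>k<n. u $ i * cnj (u $ k) * A $$ (k, i))"
    using assms by (auto simp: mat_trace_def ket_bra_def scalar_prod_def row_def col_def
        lessThan_atLeast0 intro!: sum.cong)
  also have "\<dots> = (\<Sum>k<n. \<Sum>i<n. u $ i * cnj (u $ k) * A $$ (k, i))"
    by (rule sum.swap)
  also have "\<dots> = (A *\<^sub>v u) \<bullet>c u"
    using assms by (auto simp: scalar_prod_def mult_mat_vec_def row_def lessThan_atLeast0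
        sum_distrib_right intro!: sum.cong)
  finally show ?thesis .
qed

lemma ket_bra_mult_vec:
  assumes "u \<in> carrier_vec n" and "w \<in> carrier_vec n"
  shows "ket_bra n u *\<^sub>v w = (w \<bullet>c u) \<cdot>\<^sub>v u"
  using assms by (auto simp: ket_bra_def mult_mat_vec_def scalar_prod_def row_def
      sum_distrib_left algebra_simps intro!: eq_vecI sum.cong)

lemma mult_mat_vec_cscalar_prod:
  fixes A :: "complex mat"
  assumes "A \<in> carrier_mat n n" and "x \<in> carrier_vec n" and "y \<in> carrier_vec n"
  shows "(A *\<^sub>v x) \<bullet>c y = x \<bullet>c (mat_adjoint A *\<^sub>v y)"
proof -
  have "(A *\<^sub>v x) \<bullet>c y = (\<Sum>k<n. \<Sum>i<n. A $$ (k, i) * x $ i * cnj (y $ k))"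
    using assms by (auto simp: scalar_prod_def mult_mat_vec_def row_def lessThan_atLeast0
        sum_distrib_right intro!: sum.cong)
  also have "\<dots> = (\<Sum>i<n. \<Sum>k<n. A $$ (k, i) * x $ i * cnj (y $ k))"
    by (rule sum.swap)
  also have "\<dots> = x \<bullet>c (mat_adjoint A *\<^sub>v y)"
    using assms by (auto simp: scalar_prod_def mult_mat_vec_def lessThan_atLeast0
        sum_distrib_left mat_adjoint_def mat_of_rows_def cols_def col_def intro!: sum.cong)
  finally show ?thesis .
qed

lemma cscalar_prod_smult:
  fixes v w :: "complex vec"
  assumes "v \<in> carrier_vec n" and "w \<in> carrier_vec n"
  shows "(c \<cdot>\<^sub>v v) \<bullet>c (d \<cdot>\<^sub>v w) = c * cnj d * (v \<bullet>c w)"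
  using assms by (simp add: scalar_prod_def sum_distrib_left algebra_simps)

lemma mult_cnj_unimodular: "cmod f = 1 \<Longrightarrow> f * cnj f = 1"
  by (metis complex_norm_square of_real_1 power_one)

lemma mat_sum_cscalar_prod:
  fixes M :: "'b \<Rightarrow> complex mat"
  assumes "finite F" and "\<forall>x\<in>F. M x \<in> carrier_mat n n" and u: "u \<in> carrier_vec n"
  shows "(mat_sum n M F *\<^sub>v u) \<bullet>c u = (\<Sum>x\<in>F. (M x *\<^sub>v u) \<bullet>c u)"
  using assms(1,2)
proof (induction F rule: finite_induct)
  case empty
  have "mat_sum n M {} = 0\<^sub>m n n"
    by (auto simp: mat_sum_def intro!: eq_matI)
  then show ?case
    using u by (simp add: scalar_prod_def)
next
  case (insert x F)
  have sum_carrier: "mat_sum n M F \<in> carrier_mat n n"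
    by (simp add: mat_sum_def)
  have "mat_sum n M (insert x F) = M x + mat_sum n M F"
    using insert by (auto simp: mat_sum_def intro!: eq_matI)
  then have "(mat_sum n M (insert x F) *\<^sub>v u) \<bullet>c u
      = (M x *\<^sub>v u + mat_sum n M F *\<^sub>v u) \<bullet>c u"
    using add_mult_distrib_mat_vec[OF _ sum_carrier u] insert by simp
  also have "\<dots> = (M x *\<^sub>v u) \<bullet>c u + (mat_sum n M F *\<^sub>v u) \<bullet>c u"
    using insert u sum_carrier by (intro add_scalar_prod_distrib[where n = n]) auto
  finally show ?case
    using insert by simp
qed

lemma exists_normalizing_scalar:
  fixes v :: "complex vec"
  assumes v: "v \<in> carrier_vec n" and "v \<noteq> 0\<^sub>v n"
  obtains c where "c \<noteq> 0" and "(c \<cdot>\<^sub>v v) \<bullet>c (c \<cdot>\<^sub>v v) = 1"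
proof -
  define r where "r = (\<Sum>i<n. (cmod (v $ i))\<^sup>2)"
  have "v \<bullet>c v = (\<Sum>i<n. v $ i * cnj (v $ i))"
    using v by (simp add: scalar_prod_def lessThan_atLeast0)
  also have "\<dots> = (\<Sum>i<n. of_real ((cmod (v $ i))\<^sup>2))"
    by (simp only: complex_norm_square)
  finally have norm: "v \<bullet>c v = of_real r"
    unfolding r_def by (simp only: of_real_sum)
  have "v \<bullet>c v \<noteq> 0"
    using conjugate_square_eq_0_vec[OF v] assms(2) by auto
  moreover have "r \<ge> 0"
    unfolding r_def by (intro sum_nonneg) auto
  ultimately have "r > 0"
    using norm by auto
  define c where "c = complex_of_real (1 / sqrt r)"
  have "(c \<cdot>\<^sub>v v) \<bullet>c (c \<cdot>\<^sub>v v) = c * cnj c * of_real r"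
    using cscalar_prod_smult[OF v v] norm by simp
  also have "\<dots> = 1"
    using \<open>r > 0\<close> unfolding c_def by (simp flip: of_real_mult)
  finally show ?thesis
    using that[of c] \<open>r > 0\<close> unfolding c_def by simp
qed

lemma unitary_adjoint_eigenvector:
  fixes A :: "complex mat"
  assumes "unitary_mat n A" and u: "u \<in> carrier_vec n" and "cmod f = 1"
    and eig: "A *\<^sub>v u = f \<cdot>\<^sub>v u"
  shows "mat_adjoint A *\<^sub>v u = cnj f \<cdot>\<^sub>v u"
proof -
  have A: "A \<in> carrier_mat n n" and inv: "mat_adjoint A * A = 1\<^sub>m n"
    using assms(1) by (auto simp: unitary_mat_def)
  have A': "mat_adjoint A \<in> carrier_mat n n"
    using A by (auto simp: mat_adjoint_def)
  have "u = (mat_adjoint A * A) *\<^sub>v u"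
    using inv u by simp
  also have "\<dots> = f \<cdot>\<^sub>v (mat_adjoint A *\<^sub>v u)"
    using assoc_mult_mat_vec[OF A' A u] eig A' u by (simp add: mult_mat_vec)
  finally have "cnj f \<cdot>\<^sub>v u = (cnj f * f) \<cdot>\<^sub>v (mat_adjoint A *\<^sub>v u)"
    by (metis smult_smult_assoc)
  then show ?thesis
    using mult_cnj_unimodular[OF \<open>cmod f = 1\<close>] by (simp add: mult.commute)
qed

lemma unitary_conjugate_expectation:
  fixes A B :: "complex mat"
  assumes A: "unitary_mat n A" and B: "B \<in> carrier_mat n n" and u: "u \<in> carrier_vec n"
    and f: "cmod f = 1" and eig: "A *\<^sub>v u = f \<cdot>\<^sub>v u"
  shows "((A * B * mat_adjoint A) *\<^sub>v u) \<bullet>c u = (B *\<^sub>v u) \<bullet>c u"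
proof -
  have Ac: "A \<in> carrier_mat n n"
    using A by (auto simp: unitary_mat_def)
  have A': "mat_adjoint A \<in> carrier_mat n n"
    using Ac by (auto simp: mat_adjoint_def)
  have adj: "mat_adjoint A *\<^sub>v u = cnj f \<cdot>\<^sub>v u"
    by (rule unitary_adjoint_eigenvector[OF A u f eig])
  have "(A * B * mat_adjoint A) *\<^sub>v u = A *\<^sub>v (B *\<^sub>v (mat_adjoint A *\<^sub>v u))"
    using assoc_mult_mat_vec[OF mult_carrier_mat[OF Ac B] A' u]
      assoc_mult_mat_vec[OF Ac B mult_mat_vec_carrier[OF A' u]] by simp
  also have "\<dots> = A *\<^sub>v (cnj f \<cdot>\<^sub>v (B *\<^sub>v u))"
    using adj B u by (simp add: mult_mat_vec)
  finally have "((A * B * mat_adjoint A) *\<^sub>v u) \<bullet>c u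
      = (cnj f \<cdot>\<^sub>v (B *\<^sub>v u)) \<bullet>c (mat_adjoint A *\<^sub>v u)"
    using mult_mat_vec_cscalar_prod[OF Ac _ u, of "cnj f \<cdot>\<^sub>v (B *\<^sub>v u)"] B u by simp
  also have "\<dots> = cnj f * cnj (cnj f) * ((B *\<^sub>v u) \<bullet>c u)"
    unfolding adj by (rule cscalar_prod_smult) (use B u in auto)
  also have "cnj f * cnj (cnj f) = 1"
    using mult_cnj_unimodular[OF f] by (simp add: mult.commute)
  finally show ?thesis
    by simp
qed

lemma lin_indep2_not_parallel:
  assumes "v1 \<in> carrier_vec n" and "v2 \<in> carrier_vec n" and "lin_indep2 v1 v2" and "a \<noteq> 0"
  shows "a \<cdot>\<^sub>v v1 \<noteq> b \<cdot>\<^sub>v v2"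
proof
  assume "a \<cdot>\<^sub>v v1 = b \<cdot>\<^sub>v v2"
  then have "a \<cdot>\<^sub>v v1 + (- b) \<cdot>\<^sub>v v2 = 0\<^sub>v (dim_vec v1)"
    using assms(1,2) by (auto simp: vec_eq_iff)
  then show False
    using assms(3,4) unfolding lin_indep2_def by blast
qed

lemma lin_indep2_nonzero:
  assumes "v1 \<in> carrier_vec n" and "v2 \<in> carrier_vec n" and "lin_indep2 v1 v2"
  shows "v1 \<noteq> 0\<^sub>v n" and "v2 \<noteq> 0\<^sub>v n"
proof -
  show "v1 \<noteq> 0\<^sub>v n"
    using lin_indep2_not_parallel[OF assms, of 1 0] assms(2) by auto
  show "v2 \<noteq> 0\<^sub>v n"
  proof
    assume "v2 = 0\<^sub>v n"
    then have "0 \<cdot>\<^sub>v v1 + 1 \<cdot>\<^sub>v v2 = 0\<^sub>v (dim_vec v1)"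
      using assms(1) by auto
    then show False
      using assms(3) unfolding lin_indep2_def by (metis zero_neq_one)
  qed
qed

lemma ket_bra_inj_unit:
  assumes u: "u \<in> carrier_vec n" and w: "w \<in> carrier_vec n" and "u \<bullet>c u = 1"
    and "ket_bra n u = ket_bra n w"
  shows "u = (u \<bullet>c w) \<cdot>\<^sub>v w"
  using ket_bra_mult_vec[OF u u] ket_bra_mult_vec[OF w u] assms(3,4) by simp

lemma lin_indep2_distinct_pure_states:
  assumes v1: "v1 \<in> carrier_vec n" and v2: "v2 \<in> carrier_vec n" and "lin_indep2 v1 v2"
  obtains c1 c2 where "(c1 \<cdot>\<^sub>v v1) \<bullet>c (c1 \<cdot>\<^sub>v v1) = 1" and "(c2 \<cdot>\<^sub>v v2) \<bullet>c (c2 \<cdot>\<^sub>v v2) = 1"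
    and "ket_bra n (c1 \<cdot>\<^sub>v v1) \<noteq> ket_bra n (c2 \<cdot>\<^sub>v v2)"
proof -
  obtain c1 where "c1 \<noteq> 0" and unit1: "(c1 \<cdot>\<^sub>v v1) \<bullet>c (c1 \<cdot>\<^sub>v v1) = 1"
    using exists_normalizing_scalar v1 lin_indep2_nonzero(1)[OF assms] by blast
  obtain c2 where unit2: "(c2 \<cdot>\<^sub>v v2) \<bullet>c (c2 \<cdot>\<^sub>v v2) = 1"
    using exists_normalizing_scalar v2 lin_indep2_nonzero(2)[OF assms] by blast
  have "ket_bra n (c1 \<cdot>\<^sub>v v1) \<noteq> ket_bra n (c2 \<cdot>\<^sub>v v2)"
  proof
    assume "ket_bra n (c1 \<cdot>\<^sub>v v1) = ket_bra n (c2 \<cdot>\<^sub>v v2)"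
    then have "c1 \<cdot>\<^sub>v v1 = ((c1 \<cdot>\<^sub>v v1) \<bullet>c (c2 \<cdot>\<^sub>v v2)) \<cdot>\<^sub>v (c2 \<cdot>\<^sub>v v2)"
      using ket_bra_inj_unit v1 v2 unit1 by (meson smult_carrier_vec)
    then have "c1 \<cdot>\<^sub>v v1 = (((c1 \<cdot>\<^sub>v v1) \<bullet>c (c2 \<cdot>\<^sub>v v2)) * c2) \<cdot>\<^sub>v v2"
      by (simp add: smult_smult_assoc)
    then show False
      using lin_indep2_not_parallel[OF assms \<open>c1 \<noteq> 0\<close>] by blast
  qed
  then show ?thesis
    using that unit1 unit2 by blast
qed

lemma eigenvector_smult:
  fixes A :: "'a::field mat"
  assumes "A \<in> carrier_mat n n" and "v \<in> carrier_vec n" and "A *\<^sub>v v = f \<cdot>\<^sub>v v"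
  shows "A *\<^sub>v (c \<cdot>\<^sub>v v) = f \<cdot>\<^sub>v (c \<cdot>\<^sub>v v)"
  using assms by (simp add: mult_mat_vec smult_smult_assoc mult.commute)

lemma subgroup_in_lcosets:
  assumes "group G" and "subgroup H G"
  shows "H \<in> lcosets\<^bsub>G\<^esub> H"
proof -
  have "\<one>\<^bsub>G\<^esub> <#\<^bsub>G\<^esub> H = H"
    using group.lcos_mult_one assms subgroup.subset by metis
  then show ?thesis
    unfolding LCOSETS_def using group.is_monoid[OF assms(1)] monoid.one_closed by blast
qed

lemma covariant_expectation_coset:
  assumes "group G" and "subgroup H G" and "covariant G H U M"
    and "\<forall>g \<in> carrier G. unitary_mat n (U g)" and "M H \<in> carrier_mat n n"
    and u: "u \<in> carrier_vec n"
    and "\<forall>g \<in> carrier G. cmod (f g) = 1 \<and> U g *\<^sub>v u = f g \<cdot>\<^sub>v u"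
    and x: "x \<in> lcosets\<^bsub>G\<^esub> H"
  shows "(M x *\<^sub>v u) \<bullet>c u = (M H *\<^sub>v u) \<bullet>c u"
proof -
  obtain a where a: "a \<in> carrier G" and x_eq: "x = a <#\<^bsub>G\<^esub> H"
    using x unfolding LCOSETS_def by blast
  have "U a * M H * mat_adjoint (U a) = M x"
    using assms(3) a x_eq subgroup_in_lcosets[OF assms(1,2)] unfolding covariant_def by blast
  then show ?thesis
    using unitary_conjugate_expectation[OF _ assms(5) u] assms(4,7) a by metis
qed

lemma covariant_expectation_uniform:
  assumes "group G" and "subgroup H G" and "observable n (lcosets\<^bsub>G\<^esub> H) M"
    and "covariant G H U M" and "\<forall>g \<in> carrier G. unitary_mat n (U g)"
    and u: "u \<in> carrier_vec n" and unit: "u \<bullet>c u = 1"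
    and eig: "\<forall>g \<in> carrier G. cmod (f g) = 1 \<and> U g *\<^sub>v u = f g \<cdot>\<^sub>v u"
    and x: "x \<in> lcosets\<^bsub>G\<^esub> H"
  shows "(M x *\<^sub>v u) \<bullet>c u = 1 / of_nat (card (lcosets\<^bsub>G\<^esub> H))"
proof -
  define \<Omega> where "\<Omega> = lcosets\<^bsub>G\<^esub> H"
  have fin: "finite \<Omega>" and M: "\<forall>y \<in> \<Omega>. M y \<in> carrier_mat n n"
    and sum: "mat_sum n M \<Omega> = 1\<^sub>m n"
    using assms(3) by (auto simp: observable_def positive_op_def \<Omega>_def)
  have "H \<in> \<Omega>"
    unfolding \<Omega>_def by (rule subgroup_in_lcosets[OF assms(1,2)])
  then have const: "(M y *\<^sub>v u) \<bullet>c u = (M H *\<^sub>v u) \<bullet>c u" if "y \<in> \<Omega>" for y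
    using covariant_expectation_coset[OF assms(1,2,4,5) _ u eig] M that unfolding \<Omega>_def by blast
  have "1 = (mat_sum n M \<Omega> *\<^sub>v u) \<bullet>c u"
    using sum u unit by simp
  also have "\<dots> = (\<Sum>y\<in>\<Omega>. (M y *\<^sub>v u) \<bullet>c u)"
    by (rule mat_sum_cscalar_prod[OF fin M u])
  also have "\<dots> = of_nat (card \<Omega>) * ((M H *\<^sub>v u) \<bullet>c u)"
    using const by simp
  finally have "(M H *\<^sub>v u) \<bullet>c u = 1 / of_nat (card \<Omega>)"
    by (metis nonzero_eq_divide_eq mult.commute mult_zero_left zero_neq_one)
  then show ?thesis
    using const x unfolding \<Omega>_def by simp
qed

theorem proposition4:
  fixes G :: "('a, 'c) monoid_scheme" and n :: nat and U :: "'a \<Rightarrow> complex mat"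
    and v1 v2 :: "complex vec" and f1 f2 :: "'a \<Rightarrow> complex"
  assumes "group G" and "finite (carrier G)"
    and "proj_unitary_rep G n U"
    and "v1 \<in> carrier_vec n" and "v2 \<in> carrier_vec n" and "lin_indep2 v1 v2"
    and "\<forall>g \<in> carrier G. cmod (f1 g) = 1 \<and> cmod (f2 g) = 1"
    and "\<forall>g \<in> carrier G. U g *\<^sub>v v1 = f1 g \<cdot>\<^sub>v v1 \<and> U g *\<^sub>v v2 = f2 g \<cdot>\<^sub>v v2"
  shows "\<not> (\<exists>H M. subgroup H G \<and> H \<noteq> carrier G \<and>
            observable n (lcosets\<^bsub>G\<^esub> H) M \<and> covariant G H U M \<and>
            PIC n (lcosets\<^bsub>G\<^esub> H) M)"
proof clarify
  fix H M
  assume sub: "subgroup H G" and obs: "observable n (lcosets\<^bsub>G\<^esub> H) M"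
    and cov: "covariant G H U M" and pic: "PIC n (lcosets\<^bsub>G\<^esub> H) M"
  have unitary: "\<forall>g \<in> carrier G. unitary_mat n (U g)"
    using assms(3) by (simp add: proj_unitary_rep_def)
  obtain c1 c2 where unit: "(c1 \<cdot>\<^sub>v v1) \<bullet>c (c1 \<cdot>\<^sub>v v1) = 1" "(c2 \<cdot>\<^sub>v v2) \<bullet>c (c2 \<cdot>\<^sub>v v2) = 1"
    and "ket_bra n (c1 \<cdot>\<^sub>v v1) \<noteq> ket_bra n (c2 \<cdot>\<^sub>v v2)"
    using lin_indep2_distinct_pure_states[OF assms(4-6)] by blast
  moreover have u: "c1 \<cdot>\<^sub>v v1 \<in> carrier_vec n" "c2 \<cdot>\<^sub>v v2 \<in> carrier_vec n"
    using assms(4,5) by auto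
  ultimately obtain x where x: "x \<in> lcosets\<^bsub>G\<^esub> H"
    and distinct: "mat_trace (ket_bra n (c1 \<cdot>\<^sub>v v1) * M x) \<noteq> mat_trace (ket_bra n (c2 \<cdot>\<^sub>v v2) * M x)"
    using pic unfolding PIC_def pure_state_def by blast
  have Mx: "M x \<in> carrier_mat n n"
    using obs x by (simp add: observable_def positive_op_def)
  have eig1: "\<forall>g \<in> carrier G. cmod (f1 g) = 1 \<and> U g *\<^sub>v (c1 \<cdot>\<^sub>v v1) = f1 g \<cdot>\<^sub>v (c1 \<cdot>\<^sub>v v1)"
    and eig2: "\<forall>g \<in> carrier G. cmod (f2 g) = 1 \<and> U g *\<^sub>v (c2 \<cdot>\<^sub>v v2) = f2 g \<cdot>\<^sub>v (c2 \<cdot>\<^sub>v v2)"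
    using unitary assms(4,5,7,8) by (auto simp: unitary_mat_def intro: eigenvector_smult)
  have "mat_trace (ket_bra n (c1 \<cdot>\<^sub>v v1) * M x) = 1 / of_nat (card (lcosets\<^bsub>G\<^esub> H))"
    using trace_ket_bra_mult[OF Mx u(1)]
      covariant_expectation_uniform[OF assms(1) sub obs cov unitary u(1) unit(1) eig1 x] by simp
  moreover have "mat_trace (ket_bra n (c2 \<cdot>\<^sub>v v2) * M x) = 1 / of_nat (card (lcosets\<^bsub>G\<^esub> H))"
    using trace_ket_bra_mult[OF Mx u(2)]
      covariant_expectation_uniform[OF assms(1) sub obs cov unitary u(2) unit(2) eig2 x] by simp
  ultimately show False
    using distinct by simp
qed

end
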